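(* Let $F=(A,R)$ be an abstract argumentation framework and $S,S'$ initial sets of $F$ with $S\neq S'$. (1) If $S'$ is an unattacked initial set of $F$, then $S'$ is an unattacked initial set of $F^S$. (2) If $S'\to S$, then $S'$ is not an initial set of $F^S$. (3) If not $S'\to S$, then $S'\cap\bigcup\mathrm{IS}(F^S)\neq\emptyset$.
   Context: An abstract argumentation framework is a pair $F=(A,R)$ with $A$ finite and $R\subseteq A\times A$ ($a\to b$ means $(a,b)\in R$). $S^+=\{a\mid\exists b\in S:b\to a\}$, $S^-=\{a\mid\exists b\in S: a\to b\}$, and $S\to S'$ means $S^+\cap S'\neq\emptyset$. $S$ is admissible if conflict-free and every attacker of an element of $S$ is attacked by some element of $S$. An initial set is a non-empty admissible set with no non-empty admissible proper subset; $\mathrm{IS}(F)$ denotes the set of initial sets of $F$. An initial set $S$ is unattacked if $S^-=\emptyset$. The reduct is $F^S=(A',R\cap(A'\times A'))$ with $A'=A\setminus(S\cup S^+)$. *)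

theory Defs
  imports Main
begin

definition AF :: "'a set \<Rightarrow> ('a \<times> 'a) set \<Rightarrow> bool" where
  "AF A R \<longleftrightarrow> finite A \<and> R \<subseteq> A \<times> A"

definition att_plus :: "('a \<times> 'a) set \<Rightarrow> 'a set \<Rightarrow> 'a set" where
  "att_plus R S = {a. \<exists>b\<in>S. (b, a) \<in> R}"

definition att_minus :: "('a \<times> 'a) set \<Rightarrow> 'a set \<Rightarrow> 'a set" where
  "att_minus R S = {a. \<exists>b\<in>S. (a, b) \<in> R}"

definition set_attacks :: "('a \<times> 'a) set \<Rightarrow> 'a set \<Rightarrow> 'a set \<Rightarrow> bool" where
  "set_attacks R S S' \<longleftrightarrow> att_plus R S \<inter> S' \<noteq> {}"

definition conflict_free :: "('a \<times> 'a) set \<Rightarrow> 'a set \<Rightarrow> bool" where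
  "conflict_free R S \<longleftrightarrow> (\<forall>a\<in>S. \<forall>b\<in>S. (a, b) \<notin> R)"

definition admissible :: "'a set \<Rightarrow> ('a \<times> 'a) set \<Rightarrow> 'a set \<Rightarrow> bool" where
  "admissible A R S \<longleftrightarrow> S \<subseteq> A \<and> conflict_free R S \<and>
     (\<forall>a\<in>S. \<forall>b. (b, a) \<in> R \<longrightarrow> (\<exists>c\<in>S. (c, b) \<in> R))"

definition initial :: "'a set \<Rightarrow> ('a \<times> 'a) set \<Rightarrow> 'a set \<Rightarrow> bool" where
  "initial A R S \<longleftrightarrow> S \<noteq> {} \<and> admissible A R S \<and>
     \<not> (\<exists>T. T \<noteq> {} \<and> T \<subset> S \<and> admissible A R T)"

definition IS :: "'a set \<Rightarrow> ('a \<times> 'a) set \<Rightarrow> 'a set set" where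
  "IS A R = {S. initial A R S}"

definition unattacked_initial :: "'a set \<Rightarrow> ('a \<times> 'a) set \<Rightarrow> 'a set \<Rightarrow> bool" where
  "unattacked_initial A R S \<longleftrightarrow> initial A R S \<and> att_minus R S = {}"

definition reduct_args :: "'a set \<Rightarrow> ('a \<times> 'a) set \<Rightarrow> 'a set \<Rightarrow> 'a set" where
  "reduct_args A R S = A - (S \<union> att_plus R S)"

definition reduct_att :: "'a set \<Rightarrow> ('a \<times> 'a) set \<Rightarrow> 'a set \<Rightarrow> ('a \<times> 'a) set" where
  "reduct_att A R S = R \<inter> (reduct_args A R S \<times> reduct_args A R S)"

end

theory Submission
  imports Defs
begin

text \<open>An unattacked initial set is a single unattacked argument, which survives in every reduct
  by another initial set. An admissible set counterattacks every set attacking it, so if \<open>S'\<close>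
  attacks \<open>S\<close> then \<open>S\<close> attacks \<open>S'\<close> and \<open>S'\<close> is not even a set of arguments of \<open>F\<^sup>S\<close>; if
  \<open>S'\<close> does not attack \<open>S\<close>, then neither set attacks the other, the non-empty part \<open>S' - S\<close>
  is admissible in \<open>F\<^sup>S\<close> and therefore contains an initial set of \<open>F\<^sup>S\<close>.\<close>

lemma initial_minimal:
  assumes "initial A R S" "admissible A R T" "T \<noteq> {}" "T \<subseteq> S"
  shows "T = S"
  using assms unfolding initial_def by blast

lemma initial_not_psubset:
  assumes "initial A R S" "initial A R T"
  shows "\<not> T \<subset> S"
  using assms initial_minimal unfolding initial_def by blast

lemma admissible_contains_initial:
  assumes "finite T" "T \<noteq> {}" "admissible A R T"
  shows "\<exists>U \<subseteq> T. initial A R U"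
  using assms
proof (induction T rule: finite_psubset_induct)
  case (psubset T)
  show ?case
  proof (cases "initial A R T")
    case True
    then show ?thesis by blast
  next
    case False
    then obtain V where V: "V \<noteq> {}" "V \<subset> T" "admissible A R V"
      using psubset.prems unfolding initial_def by blast
    then obtain U where "U \<subseteq> V" "initial A R U"
      using psubset.IH[OF V(2,1,3)] by blast
    with \<open>V \<subset> T\<close> show ?thesis by blast
  qed
qed

lemma admissible_singleton_unattacked:
  assumes "a \<in> A" "\<forall>b. (b, a) \<notin> R"
  shows "admissible A R {a}"
  using assms unfolding admissible_def conflict_free_def by simp

lemma unattacked_initial_iff:
  "unattacked_initial A R S \<longleftrightarrow> (\<exists>a \<in> A. S = {a} \<and> (\<forall>b. (b, a) \<notin> R))"
proof
  assume "unattacked_initial A R S"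
  then have init: "initial A R S" and unatt: "\<forall>a \<in> S. \<forall>b. (b, a) \<notin> R"
    unfolding unattacked_initial_def att_minus_def by auto
  then obtain a where "a \<in> S"
    unfolding initial_def by blast
  moreover have "S \<subseteq> A"
    using init unfolding initial_def admissible_def by blast
  ultimately have a: "a \<in> A" "\<forall>b. (b, a) \<notin> R"
    using unatt by auto
  then have "{a} = S"
    using initial_minimal[OF init admissible_singleton_unattacked] \<open>a \<in> S\<close> by blast
  with a show "\<exists>a \<in> A. S = {a} \<and> (\<forall>b. (b, a) \<notin> R)" by blast
next
  assume "\<exists>a \<in> A. S = {a} \<and> (\<forall>b. (b, a) \<notin> R)"
  then obtain a where a: "a \<in> A" "\<forall>b. (b, a) \<notin> R" and S: "S = {a}" by blast
  have "initial A R {a}"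
    using admissible_singleton_unattacked[OF a] unfolding initial_def by auto
  moreover have "att_minus R {a} = {}"
    using a(2) unfolding att_minus_def by blast
  ultimately show "unattacked_initial A R S"
    unfolding unattacked_initial_def S by simp
qed

lemma admissible_counterattacks:
  assumes "admissible A R S" "set_attacks R T S"
  shows "set_attacks R S T"
  using assms unfolding admissible_def set_attacks_def att_plus_def by blast

lemma admissible_reduct_diff:
  assumes "admissible A R S" "admissible A R T" "\<not> set_attacks R S T"
  shows "admissible (reduct_args A R S) (reduct_att A R S) (T - S)"
proof -
  have args: "T - S \<subseteq> reduct_args A R S"
    using assms unfolding admissible_def set_attacks_def reduct_args_def att_plus_def by blast
  have "\<exists>c \<in> T - S. (c, b) \<in> reduct_att A R S"
    if "a \<in> T - S" "(b, a) \<in> reduct_att A R S" for a b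
  proof -
    from that have "(b, a) \<in> R" "b \<in> reduct_args A R S"
      unfolding reduct_att_def by auto
    moreover obtain c where "c \<in> T" "(c, b) \<in> R"
      using assms(2) \<open>a \<in> T - S\<close> \<open>(b, a) \<in> R\<close> unfolding admissible_def by blast
    \<comment> \<open>the defender \<open>c\<close> of \<open>a\<close> lies outside \<open>S\<close>, since \<open>b\<close> is not attacked by \<open>S\<close>\<close>
    ultimately have "c \<in> T - S"
      unfolding reduct_args_def att_plus_def by blast
    with args \<open>(c, b) \<in> R\<close> \<open>b \<in> reduct_args A R S\<close> show ?thesis
      unfolding reduct_att_def by blast
  qed
  moreover have "conflict_free (reduct_att A R S) (T - S)"
    using assms(2) unfolding admissible_def conflict_free_def reduct_att_def by blast
  ultimately show ?thesis
    using args unfolding admissible_def by blast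
qed

lemma unattacked_initial_reduct:
  assumes "initial A R S" "unattacked_initial A R S'" "S \<noteq> S'"
  shows "unattacked_initial (reduct_args A R S) (reduct_att A R S) S'"
proof -
  obtain a where a: "a \<in> A" "\<forall>b. (b, a) \<notin> R" and S': "S' = {a}"
    using assms(2) unfolding unattacked_initial_iff by blast
  have "a \<notin> S"
    using initial_minimal[OF assms(1) admissible_singleton_unattacked[OF a]] assms(3) S' by blast
  with a have "a \<in> reduct_args A R S" "\<forall>b. (b, a) \<notin> reduct_att A R S"
    unfolding reduct_args_def reduct_att_def att_plus_def by auto
  then show ?thesis
    unfolding unattacked_initial_iff S' by blast
qed

lemma attacking_not_initial_reduct:
  assumes "admissible A R S" "set_attacks R S' S"
  shows "\<not> initial (reduct_args A R S) (reduct_att A R S) S'"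
proof -
  have "\<not> S' \<subseteq> reduct_args A R S"
    using admissible_counterattacks[OF assms]
    unfolding set_attacks_def reduct_args_def by blast
  then show ?thesis
    unfolding initial_def admissible_def by blast
qed

lemma not_attacking_meets_initial_reduct:
  assumes "finite A" "initial A R S" "initial A R S'" "S \<noteq> S'" "\<not> set_attacks R S' S"
  shows "S' \<inter> \<Union> (IS (reduct_args A R S) (reduct_att A R S)) \<noteq> {}"
proof -
  have adm: "admissible A R S" "admissible A R S'"
    using assms(2,3) unfolding initial_def by auto
  then have "admissible (reduct_args A R S) (reduct_att A R S) (S' - S)"
    using assms(5) admissible_counterattacks admissible_reduct_diff by blast
  moreover have "S' - S \<noteq> {}"
    using initial_not_psubset[OF assms(2,3)] assms(4) by blast
  moreover have "finite (S' - S)"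
    using assms(1) adm(2) finite_subset unfolding admissible_def by (metis finite_Diff)
  ultimately obtain U where "U \<subseteq> S' - S" and U: "initial (reduct_args A R S) (reduct_att A R S) U"
    by (meson admissible_contains_initial)
  moreover from U have "U \<in> IS (reduct_args A R S) (reduct_att A R S)" "U \<noteq> {}"
    unfolding IS_def initial_def by simp_all
  ultimately show ?thesis
    by blast
qed

theorem proposition4:
  fixes A :: "'a set" and R :: "('a \<times> 'a) set" and S S' :: "'a set"
  assumes "AF A R"
    and "initial A R S" and "initial A R S'" and "S \<noteq> S'"
  shows "(unattacked_initial A R S' \<longrightarrow>
            unattacked_initial (reduct_args A R S) (reduct_att A R S) S')
       \<and> (set_attacks R S' S \<longrightarrow> \<not> initial (reduct_args A R S) (reduct_att A R S) S')
       \<and> (\<not> set_attacks R S' S \<longrightarrow>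
            S' \<inter> \<Union> (IS (reduct_args A R S) (reduct_att A R S)) \<noteq> {})"
proof (intro conjI impI)
  have "finite A" "admissible A R S"
    using assms(1,2) unfolding AF_def initial_def by auto
  show "unattacked_initial (reduct_args A R S) (reduct_att A R S) S'"
    if "unattacked_initial A R S'"
    using unattacked_initial_reduct[OF assms(2) that assms(4)] .
  show "\<not> initial (reduct_args A R S) (reduct_att A R S) S'" if "set_attacks R S' S"
    using attacking_not_initial_reduct[OF \<open>admissible A R S\<close> that] .
  show "S' \<inter> \<Union> (IS (reduct_args A R S) (reduct_att A R S)) \<noteq> {}" if "\<not> set_attacks R S' S"
    using not_attacking_meets_initial_reduct[OF \<open>finite A\<close> assms(2-4) that] .
qed

end
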